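(* With the notation of the context, as formal power series in the two variables $x$ and $q$, $$\sum_{\lambda\in\mathcal{D}}(-1)^{n_\lambda}x^{m_\lambda+n_\lambda}q^{N_\lambda} =1+\sum_{r=1}^\infty(-1)^r\Big[x^{3r-1}q^{r(3r-1)/2}+x^{3r}q^{r(3r+1)/2}\Big].$$
   Context: $\mathcal{D}$ denotes the set of all partitions into distinct parts (of all nonnegative integers, including the empty partition of $0$). For $\lambda\in\mathcal{D}$, $N_\lambda$ is the integer partitioned by $\lambda$, $n_\lambda$ is the number of parts of $\lambda$, and $m_\lambda$ is the largest part of $\lambda$ (with $m_\lambda=0$ for the empty partition). *)

theory Defs
  imports Main
begin

text \<open>A partition into distinct parts is represented by the (finite) set of its parts,
  all of which are positive integers. The empty set is the empty partition of 0.\<close>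

definition distinct_partitions :: "nat set set" where
  "distinct_partitions = {S. finite S \<and> 0 \<notin> S}"

definition part_N :: "nat set \<Rightarrow> nat" where
  "part_N S = \<Sum>S"

definition part_n :: "nat set \<Rightarrow> nat" where
  "part_n S = card S"

definition part_m :: "nat set \<Rightarrow> nat" where
  "part_m S = (if S = {} then 0 else Max S)"

end

theory Submission
  imports Defs
begin

text \<open>Franklin's involution. Let \<open>s\<close> be the smallest part of a partition into distinct parts and
  \<open>\<sigma>\<close> the number of parts in the run of consecutive integers ending in the largest part. If
  \<open>s \<le> \<sigma>\<close>, delete the part \<open>s\<close> and add 1 to each of the \<open>s\<close> largest parts; otherwise subtract 1
  from each of the \<open>\<sigma>\<close> largest parts and add a new part \<open>\<sigma>\<close>. Either move keeps \<open>N\<close>, changes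
  \<open>n\<close> by one and \<open>m\<close> by one in the opposite direction, so it keeps \<open>m + n\<close> and flips the
  sign \<open>(-1)^n\<close>; the two moves are inverse to each other. The only partitions on which they
  fail are the empty one and the pentagonal ones \<open>{r, \<dots>, 2r - 1}\<close> and \<open>{r + 1, \<dots>, 2r}\<close>,
  whose weights make up the right-hand side.\<close>

definition top_run_length :: "nat set \<Rightarrow> nat" where
  "top_run_length S = (LEAST t. Max S - t \<notin> S)"

lemma top_run_length_eqI:
  assumes "Max S - t \<notin> S" and "\<And>i. i < t \<Longrightarrow> Max S - i \<in> S"
  shows "top_run_length S = t"
  unfolding top_run_length_def
  by (rule Least_equality) (use assms not_le in blast)+

lemma top_run_length_not_mem: "0 \<notin> S \<Longrightarrow> Max S - top_run_length S \<notin> S"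
  unfolding top_run_length_def by (rule LeastI[of _ "Max S"]) simp

lemma mem_top_run: "i < top_run_length S \<Longrightarrow> Max S - i \<in> S"
  unfolding top_run_length_def using not_less_Least by blast

lemma le_top_run_lengthI:
  assumes "0 \<notin> S" and "\<And>i. i < t \<Longrightarrow> Max S - i \<in> S"
  shows "t \<le> top_run_length S"
  using top_run_length_not_mem[OF assms(1)] assms(2) not_le by blast

lemma top_run_length_le_Max: "0 \<notin> S \<Longrightarrow> top_run_length S \<le> Max S"
  unfolding top_run_length_def by (rule Least_le) simp

lemma top_run_subset: "{Max S + 1 - top_run_length S..Max S} \<subseteq> S"
proof
  fix x assume "x \<in> {Max S + 1 - top_run_length S..Max S}"
  then have "Max S - (Max S - x) \<in> S" and "Max S - (Max S - x) = x"
    using mem_top_run[of "Max S - x" S] by auto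
  then show "x \<in> S" by simp
qed

lemma top_run_length_pos:
  assumes "S \<in> distinct_partitions" and "S \<noteq> {}"
  shows "0 < top_run_length S"
proof -
  have "finite S" "0 \<notin> S" using assms(1) by (auto simp: distinct_partitions_def)
  then show ?thesis using top_run_length_not_mem[of S] assms(2) by (cases "top_run_length S") auto
qed

lemma Min_add_top_run_length_le:
  assumes "S \<in> distinct_partitions" and "S \<noteq> {}"
  shows "Min S + top_run_length S \<le> Max S + 1"
proof -
  have fin: "finite S" "0 \<notin> S" using assms(1) by (auto simp: distinct_partitions_def)
  have "top_run_length S \<le> Max S" using top_run_length_le_Max[OF fin(2)] .
  moreover have "Max S + 1 - top_run_length S \<in> S"
    using top_run_subset[of S] top_run_length_pos[OF assms] calculation by auto
  then have "Min S \<le> Max S + 1 - top_run_length S" using fin by simp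
  ultimately show ?thesis by linarith
qed

lemma eq_atLeastAtMost_if_top_run_reaches_Min:
  assumes "finite S" and "Max S + 1 \<le> Min S + top_run_length S"
  shows "S = {Min S..Max S}"
proof
  show "S \<subseteq> {Min S..Max S}" using assms(1) by auto
  have "{Min S..Max S} \<subseteq> {Max S + 1 - top_run_length S..Max S}" using assms(2) by auto
  then show "{Min S..Max S} \<subseteq> S" using top_run_subset by blast
qed

lemma Max_atLeastAtMost_nat: "a \<le> b \<Longrightarrow> Max {a..b} = (b::nat)"
  by (intro Max_eqI) auto

lemma Min_atLeastAtMost_nat: "a \<le> b \<Longrightarrow> Min {a..b} = (a::nat)"
  by (intro Min_eqI) auto

lemma top_run_length_atLeastAtMost:
  assumes "0 < a" and "a \<le> b"
  shows "top_run_length {a..b} = b + 1 - a"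
  by (intro top_run_length_eqI) (use assms in \<open>auto simp: Max_atLeastAtMost_nat\<close>)

text \<open>When \<open>Min S \<le> \<sigma>\<close>, the \<open>Min S\<close> largest parts form a run, so adding 1 to each of them
  only replaces the part \<open>Max S + 1 - Min S\<close> by \<open>Max S + 1\<close>. Likewise, subtracting 1 from the
  \<open>\<sigma>\<close> parts of the top run only replaces \<open>Max S\<close> by \<open>Max S - \<sigma>\<close>.\<close>

definition smallest_to_top :: "nat set \<Rightarrow> nat set" where
  "smallest_to_top S = insert (Max S + 1) (S - {Min S, Max S + 1 - Min S})"

definition top_to_smallest :: "nat set \<Rightarrow> nat set" where
  "top_to_smallest S =
     insert (top_run_length S) (insert (Max S - top_run_length S) (S - {Max S}))"

lemma smallest_to_top_partner:
  assumes "S \<in> distinct_partitions" and "S \<noteq> {}"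
    and "Min S \<le> top_run_length S" and "Max S + 1 \<noteq> 2 * Min S"
  shows "Max S + 1 - Min S \<in> S" and "Min S < Max S + 1 - Min S"
proof -
  have fin: "finite S" "0 \<notin> S" using assms(1) by (auto simp: distinct_partitions_def)
  then have "0 < Min S" "Min S \<le> Max S" using assms(2) Min_in[of S] by (auto intro: gr0I)
  then have "Max S + 1 - Min S \<in> {Max S + 1 - top_run_length S..Max S}" using assms(3) by auto
  then show "Max S + 1 - Min S \<in> S" using top_run_subset by blast
  then have "Min S \<le> Max S + 1 - Min S" using fin by simp
  then show "Min S < Max S + 1 - Min S" using assms(4) by linarith
qed

lemma smallest_to_top:
  assumes S: "S \<in> distinct_partitions" "S \<noteq> {}"
    and le: "Min S \<le> top_run_length S" and ne: "Max S + 1 \<noteq> 2 * Min S"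
  defines "T \<equiv> smallest_to_top S"
  shows "T \<in> distinct_partitions" and "T \<noteq> {}" and "Max T = Max S + 1"
    and "part_N T = part_N S" and "card T + 1 = card S"
    and "top_run_length T = Min S" and "Min S < Min T" and "top_to_smallest T = S"
proof -
  define s t where "s = Min S" and "t = Max S + 1 - Min S"
  have fin: "finite S" "0 \<notin> S" using S(1) by (auto simp: distinct_partitions_def)
  have tS: "t \<in> S" and st: "s < t" using smallest_to_top_partner[OF S le ne] by (simp_all add: s_def t_def)
  have sS: "s \<in> S" using fin S(2) by (simp add: s_def)
  then have s0: "0 < s" using fin by (auto intro: gr0I)
  have Max1: "Max S + 1 \<notin> S" using fin by (auto dest: Max_ge)
  have T: "T = insert (Max S + 1) (S - {s, t})" by (simp add: T_def smallest_to_top_def s_def t_def)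
  show "T \<in> distinct_partitions" "T \<noteq> {}" using fin by (auto simp: T distinct_partitions_def)
  show MaxT: "Max T = Max S + 1" unfolding T using fin by (intro Max_eqI) (auto dest: Max_ge)
  have "\<Sum>S = s + t + \<Sum>(S - {s, t})"
    using fin sS tS st sum.remove[of "S - {s}" t id] by (simp add: sum.remove Diff_insert2[symmetric])
  moreover have "\<Sum>T = Max S + 1 + \<Sum>(S - {s, t})" using fin Max1 by (simp add: T)
  ultimately show "part_N T = part_N S" using st by (simp add: part_N_def s_def t_def)
  have "card {s, t} \<le> card S" using fin sS tS by (intro card_mono) auto
  then have "card S = card (S - {s, t}) + 2" using fin sS tS st by (simp add: card_Diff_subset)
  then show "card T + 1 = card S" using fin Max1 by (simp add: T)
  show runT: "top_run_length T = Min S"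
  proof (rule top_run_length_eqI)
    show "Max T - Min S \<notin> T" using Max1 st s0 by (simp add: MaxT) (simp add: T s_def t_def)
    fix i assume "i < Min S"
    then show "Max T - i \<in> T"
      using mem_top_run[of "i - 1" S] le st
      by (simp add: MaxT) (cases i, auto simp: T s_def t_def)
  qed
  have "s < x" if "x \<in> T" for x
    using that fin sS Max1 Max_ge[of S s] by (auto simp: T s_def le_Suc_eq order.strict_iff_order)
  then show "Min S < Min T" using fin \<open>T \<noteq> {}\<close> by (simp add: T s_def)
  have "top_to_smallest T = insert s (insert t (S - {s, t}))"
    unfolding top_to_smallest_def runT MaxT using Max1 st by (auto simp: T s_def t_def)
  then show "top_to_smallest T = S" using sS tS by auto
qed

lemma top_to_smallest_new_parts:
  assumes "S \<in> distinct_partitions" and "S \<noteq> {}"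
    and "top_run_length S < Min S" and "Max S \<noteq> 2 * top_run_length S"
  shows "top_run_length S \<notin> S" and "Max S - top_run_length S \<notin> S"
    and "top_run_length S < Max S - top_run_length S" and "Max S - top_run_length S < Max S"
proof -
  have fin: "finite S" "0 \<notin> S" using assms(1) by (auto simp: distinct_partitions_def)
  show "top_run_length S \<notin> S" using assms(3) fin by (auto dest: Min_le)
  show "Max S - top_run_length S \<notin> S" using top_run_length_not_mem[OF fin(2)] .
  show "top_run_length S < Max S - top_run_length S"
    using Min_add_top_run_length_le[OF assms(1,2)] assms(3,4) by linarith
  then show "Max S - top_run_length S < Max S" using top_run_length_pos[OF assms(1,2)] by linarith
qed

lemma top_to_smallest:
  assumes S: "S \<in> distinct_partitions" "S \<noteq> {}"
    and lt: "top_run_length S < Min S" and ne: "Max S \<noteq> 2 * top_run_length S"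
  defines "T \<equiv> top_to_smallest S"
  shows "T \<in> distinct_partitions" and "T \<noteq> {}" and "Max T + 1 = Max S"
    and "part_N T = part_N S" and "card T = card S + 1"
    and "Min T = top_run_length S" and "Min T \<le> top_run_length T" and "smallest_to_top T = S"
proof -
  define g u where "g = top_run_length S" and "u = Max S - top_run_length S"
  have fin: "finite S" "0 \<notin> S" using S(1) by (auto simp: distinct_partitions_def)
  have MS: "Max S \<in> S" using fin S(2) by simp
  have g0: "0 < g" using top_run_length_pos[OF S] by (simp add: g_def)
  have new: "g \<notin> S" "u \<notin> S" "g < u" "u < Max S"
    using top_to_smallest_new_parts[OF S lt ne] by (simp_all add: g_def u_def)
  have T: "T = insert g (insert u (S - {Max S}))" by (simp add: T_def top_to_smallest_def g_def u_def)
  show "T \<in> distinct_partitions" "T \<noteq> {}" using fin g0 new(3) by (auto simp: T distinct_partitions_def)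
  have "Max S - 1 \<in> T"
    using mem_top_run[of 1 S] new(4) by (cases "g = 1") (auto simp: T g_def u_def)
  then have MaxT: "Max T = Max S - 1"
    using fin new by (intro Max_eqI) (auto simp: T dest: Max_ge)
  then show "Max T + 1 = Max S" using new(4) by simp
  have "\<Sum>S = Max S + \<Sum>(S - {Max S})" using fin MS by (simp add: sum.remove)
  moreover have "\<Sum>T = g + u + \<Sum>(S - {Max S})" using fin new by (simp add: T)
  ultimately show "part_N T = part_N S" using new by (simp add: part_N_def u_def g_def)
  have "card S = card (S - {Max S}) + 1" using card_Suc_Diff1[OF fin(1) MS] by simp
  then show "card T = card S + 1" using fin new by (simp add: T)
  have MinT: "Min T = g"
    using fin new lt by (intro Min_eqI) (auto simp: T g_def dest: Min_le)
  then show "Min T = top_run_length S" by (simp add: g_def)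
  have "Max T - i \<in> T" if "i < g" for i
  proof (cases "i + 1 = g")
    case True
    then show ?thesis using MaxT by (simp add: T u_def g_def)
  next
    case False
    then show ?thesis using that mem_top_run[of "i + 1" S] MaxT new(4) by (auto simp: T g_def)
  qed
  then show "Min T \<le> top_run_length T"
    using MinT \<open>T \<in> distinct_partitions\<close> by (auto intro: le_top_run_lengthI simp: distinct_partitions_def)
  have "smallest_to_top T = insert (Max S) (S - {Max S})"
    unfolding smallest_to_top_def MaxT MinT using new by (auto simp: T u_def g_def)
  then show "smallest_to_top T = S" using MS by auto
qed

definition franklin :: "nat set \<Rightarrow> nat set" where
  "franklin S = (if Min S \<le> top_run_length S then smallest_to_top S else top_to_smallest S)"

definition franklin_exceptional :: "nat set \<Rightarrow> bool" where
  "franklin_exceptional S \<longleftrightarrow> S = {}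
     \<or> (Min S \<le> top_run_length S \<and> Max S + 1 = 2 * Min S)
     \<or> (top_run_length S < Min S \<and> Max S = 2 * top_run_length S)"

lemma franklin_involution:
  assumes S: "S \<in> distinct_partitions" and exc: "\<not> franklin_exceptional S"
  shows "franklin S \<in> distinct_partitions" and "\<not> franklin_exceptional (franklin S)"
    and "franklin (franklin S) = S" and "part_N (franklin S) = part_N S"
    and "part_m (franklin S) + part_n (franklin S) = part_m S + part_n S"
    and "(-1::int) ^ part_n (franklin S) = - ((-1) ^ part_n S)"
proof -
  have ne: "S \<noteq> {}" using exc by (simp add: franklin_exceptional_def)
  have "franklin S \<in> distinct_partitions \<and> \<not> franklin_exceptional (franklin S)
    \<and> franklin (franklin S) = S \<and> part_N (franklin S) = part_N S
    \<and> Max (franklin S) + card (franklin S) = Max S + card S \<and> franklin S \<noteq> {}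
    \<and> (card (franklin S) = card S + 1 \<or> card S = card (franklin S) + 1)"
  proof (cases "Min S \<le> top_run_length S")
    case True
    then have ne2: "Max S + 1 \<noteq> 2 * Min S" using exc by (simp add: franklin_exceptional_def)
    note T = smallest_to_top[OF S ne True ne2]
    have "franklin S = smallest_to_top S" "franklin (smallest_to_top S) = S"
      using True T(6-8) by (simp_all add: franklin_def)
    then show ?thesis using T ne2 by (auto simp: franklin_exceptional_def)
  next
    case False
    then have lt: "top_run_length S < Min S" and ne2: "Max S \<noteq> 2 * top_run_length S"
      using exc by (simp_all add: franklin_exceptional_def)
    note T = top_to_smallest[OF S ne lt ne2]
    have "franklin S = top_to_smallest S" "franklin (top_to_smallest S) = S"
      using False T(7,8) by (simp_all add: franklin_def)
    then show ?thesis using T ne2 by (auto simp: franklin_exceptional_def)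
  qed
  then show "franklin S \<in> distinct_partitions" "\<not> franklin_exceptional (franklin S)"
    "franklin (franklin S) = S" "part_N (franklin S) = part_N S"
    "part_m (franklin S) + part_n (franklin S) = part_m S + part_n S"
    "(-1::int) ^ part_n (franklin S) = - ((-1) ^ part_n S)"
    using ne by (auto simp: part_m_def part_n_def)
qed

lemma franklin_exceptional_atLeastLessThan_double:
  assumes "0 < r" shows "franklin_exceptional {r..<2*r}"
proof -
  have "{r..<2*r} = {r..2*r - 1}" using assms by auto
  moreover have "top_run_length {r..2*r - 1} = r"
    using top_run_length_atLeastAtMost[of r "2*r - 1"] assms by simp
  ultimately show ?thesis
    using assms by (simp add: franklin_exceptional_def Min_atLeastAtMost_nat Max_atLeastAtMost_nat)
qed

lemma franklin_exceptional_greaterThanAtMost_double: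
  assumes "0 < r" shows "franklin_exceptional {r<..2*r}"
proof -
  have "{r<..2*r} = {r + 1..2*r}" by auto
  moreover have "top_run_length {r + 1..2*r} = r"
    using top_run_length_atLeastAtMost[of "r + 1" "2*r"] assms by simp
  ultimately show ?thesis
    using assms by (simp add: franklin_exceptional_def Min_atLeastAtMost_nat Max_atLeastAtMost_nat)
qed

lemma franklin_exceptional_iff:
  assumes "S \<in> distinct_partitions"
  shows "franklin_exceptional S \<longleftrightarrow>
    S = {} \<or> (\<exists>r>0. S = {r..<2*r}) \<or> (\<exists>r>0. S = {r<..2*r})"
proof
  assume exc: "franklin_exceptional S"
  show "S = {} \<or> (\<exists>r>0. S = {r..<2*r}) \<or> (\<exists>r>0. S = {r<..2*r})"
  proof (cases "S = {}")
    case False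
    have fin: "finite S" "0 \<notin> S" using assms by (auto simp: distinct_partitions_def)
    have r0: "0 < top_run_length S" and le: "Min S + top_run_length S \<le> Max S + 1"
      using top_run_length_pos[OF assms False] Min_add_top_run_length_le[OF assms False] .
    consider "Min S \<le> top_run_length S" "Max S + 1 = 2 * Min S"
      | "top_run_length S < Min S" "Max S = 2 * top_run_length S"
      using exc False by (auto simp: franklin_exceptional_def)
    then show ?thesis
    proof cases
      case 1
      have "S = {Min S..Max S}" using fin 1 by (intro eq_atLeastAtMost_if_top_run_reaches_Min) auto
      also have "\<dots> = {Min S..<2 * Min S}" using 1(2) by auto
      finally have "S = {Min S..<2 * Min S}" .
      moreover have "0 < Min S" using 1(2) by simp
      ultimately show ?thesis by blast
    next
      case 2
      have "Min S = Suc (top_run_length S)" using 2 le by linarith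
      have "S = {Min S..Max S}" using fin 2 le by (intro eq_atLeastAtMost_if_top_run_reaches_Min) auto
      also have "\<dots> = {top_run_length S<..2 * top_run_length S}"
        unfolding \<open>Min S = Suc (top_run_length S)\<close> 2(2) by (rule atLeastSucAtMost_greaterThanAtMost)
      finally show ?thesis using r0 by blast
    qed
  qed simp
next
  assume "S = {} \<or> (\<exists>r>0. S = {r..<2*r}) \<or> (\<exists>r>0. S = {r<..2*r})"
  then show "franklin_exceptional S"
    using franklin_exceptional_atLeastLessThan_double franklin_exceptional_greaterThanAtMost_double
    by (elim disjE exE conjE) (simp_all add: franklin_exceptional_def)
qed

definition partitions_of :: "nat \<Rightarrow> nat \<Rightarrow> nat set set" where
  "partitions_of N k = {p \<in> distinct_partitions. part_N p = N \<and> part_m p + part_n p = k}"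

lemma parts_atLeastLessThan_double:
  assumes "0 < r"
  shows "{r..<2*r} \<in> distinct_partitions" and "part_N {r..<2*r} = r * (3*r - 1) div 2"
    and "part_n {r..<2*r} = r" and "part_m {r..<2*r} + part_n {r..<2*r} = 3*r - 1"
proof -
  show "{r..<2*r} \<in> distinct_partitions" using assms by (auto simp: distinct_partitions_def)
  show "part_N {r..<2*r} = r * (3*r - 1) div 2"
    using assms by (cases r) (simp_all add: part_N_def Sum_Ico_nat algebra_simps)
  show "part_n {r..<2*r} = r" by (simp add: part_n_def)
  have "{r..<2*r} = {r..2*r - 1}" using assms by auto
  then have "part_m {r..<2*r} = 2*r - 1" using assms by (simp add: part_m_def Max_atLeastAtMost_nat)
  then show "part_m {r..<2*r} + part_n {r..<2*r} = 3*r - 1" using assms by (simp add: part_n_def)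
qed

lemma parts_greaterThanAtMost_double:
  assumes "0 < r"
  shows "{r<..2*r} \<in> distinct_partitions" and "part_N {r<..2*r} = r * (3*r + 1) div 2"
    and "part_n {r<..2*r} = r" and "part_m {r<..2*r} + part_n {r<..2*r} = 3*r"
proof -
  show "{r<..2*r} \<in> distinct_partitions" by (auto simp: distinct_partitions_def)
  show "part_N {r<..2*r} = r * (3*r + 1) div 2"
    by (simp add: part_N_def atLeastSucAtMost_greaterThanAtMost[symmetric] Sum_Icc_nat algebra_simps)
  show "part_n {r<..2*r} = r" by (simp add: part_n_def)
  have "{r<..2*r} = {r + 1..2*r}" by auto
  then have "part_m {r<..2*r} = 2*r" using assms by (simp add: part_m_def Max_atLeastAtMost_nat)
  then show "part_m {r<..2*r} + part_n {r<..2*r} = 3*r" by (simp add: part_n_def)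
qed

lemma finite_partitions_of: "finite (partitions_of N k)"
proof (rule finite_subset)
  show "partitions_of N k \<subseteq> Pow {..N}"
    using member_le_sum[of _ _ "\<lambda>x. x"]
    by (auto simp: partitions_of_def distinct_partitions_def part_N_def)
qed simp

lemma sum_eq_0_if_sign_reversing_involution:
  fixes w :: "'a \<Rightarrow> 'b::linordered_ab_group_add"
  assumes "\<And>x. x \<in> X \<Longrightarrow> f x \<in> X" and "\<And>x. x \<in> X \<Longrightarrow> f (f x) = x"
    and "\<And>x. x \<in> X \<Longrightarrow> w (f x) = - w x"
  shows "sum w X = 0"
proof -
  have "sum w X = sum (\<lambda>x. - w x) X"
    by (rule sum.reindex_bij_witness[where i = f and j = f]) (use assms in auto)
  then show ?thesis by (simp add: sum_negf)
qed

lemma sum_sign_partitions_of_eq_exceptional: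
  "(\<Sum>p \<in> partitions_of N k. (-1::int) ^ part_n p)
     = (\<Sum>p \<in> {p \<in> partitions_of N k. franklin_exceptional p}. (-1) ^ part_n p)"
proof -
  have "(\<Sum>p \<in> {p \<in> partitions_of N k. \<not> franklin_exceptional p}. (-1::int) ^ part_n p) = 0"
    by (rule sum_eq_0_if_sign_reversing_involution[where f = franklin])
      (auto simp: partitions_of_def franklin_involution)
  moreover have "{p \<in> partitions_of N k. franklin_exceptional p}
      \<union> {p \<in> partitions_of N k. \<not> franklin_exceptional p} = partitions_of N k" by auto
  ultimately show ?thesis
    using sum.union_disjoint[of "{p \<in> partitions_of N k. franklin_exceptional p}"
        "{p \<in> partitions_of N k. \<not> franklin_exceptional p}" "\<lambda>p. (-1::int) ^ part_n p"]
      finite_partitions_of[of N k]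
    by auto
qed

lemma atLeastLessThan_double_in_partitions_of:
  assumes "0 < r"
  shows "{r..<2*r} \<in> partitions_of N k \<longleftrightarrow> k = 3*r - 1 \<and> N = r * (3*r - 1) div 2"
  using parts_atLeastLessThan_double[OF assms] by (auto simp: partitions_of_def)

lemma greaterThanAtMost_double_in_partitions_of:
  assumes "0 < r"
  shows "{r<..2*r} \<in> partitions_of N k \<longleftrightarrow> k = 3*r \<and> N = r * (3*r + 1) div 2"
  using parts_greaterThanAtMost_double[OF assms] by (auto simp: partitions_of_def)

lemma exceptional_partitions_of:
  "{p \<in> partitions_of N k. franklin_exceptional p} =
     {p. p = {} \<and> k = 0 \<and> N = 0}
     \<union> (\<lambda>r. {r..<2*r}) ` {r \<in> {1..k+1}. k = 3*r - 1 \<and> N = r * (3*r - 1) div 2}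
     \<union> (\<lambda>r. {r<..2*r}) ` {r \<in> {1..k+1}. k = 3*r \<and> N = r * (3*r + 1) div 2}"
  (is "?E = ?Z \<union> ?M \<union> ?P")
proof (rule equalityI, rule subsetI)
  fix p assume p: "p \<in> ?E"
  then consider "p = {}" | r where "0 < r" "p = {r..<2*r}" | r where "0 < r" "p = {r<..2*r}"
    by (auto simp: partitions_of_def franklin_exceptional_iff)
  then show "p \<in> ?Z \<union> ?M \<union> ?P"
  proof cases
    case 1
    then show ?thesis using p by (simp add: partitions_of_def part_N_def part_m_def part_n_def)
  next
    case (2 r)
    then have "r \<in> {r \<in> {1..k+1}. k = 3*r - 1 \<and> N = r * (3*r - 1) div 2}"
      using p atLeastLessThan_double_in_partitions_of[OF \<open>0 < r\<close>] by auto
    then show ?thesis using 2 by blast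
  next
    case (3 r)
    then have "r \<in> {r \<in> {1..k+1}. k = 3*r \<and> N = r * (3*r + 1) div 2}"
      using p greaterThanAtMost_double_in_partitions_of[OF \<open>0 < r\<close>] by auto
    then show ?thesis using 3 by blast
  qed
next
  have "?Z \<subseteq> ?E"
    by (auto simp: partitions_of_def distinct_partitions_def franklin_exceptional_def
        part_N_def part_m_def part_n_def)
  moreover have "?M \<union> ?P \<subseteq> ?E"
    using atLeastLessThan_double_in_partitions_of greaterThanAtMost_double_in_partitions_of
      franklin_exceptional_atLeastLessThan_double franklin_exceptional_greaterThanAtMost_double
    by auto
  ultimately show "?Z \<union> ?M \<union> ?P \<subseteq> ?E" by blast
qed

lemma sum_sign_exceptional_partitions_of:
  "(\<Sum>p \<in> {p \<in> partitions_of N k. franklin_exceptional p}. (-1::int) ^ part_n p)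
     = (if k = 0 \<and> N = 0 then 1 else 0)
       + (\<Sum>r \<in> {1..k+1}.
            (if k = 3*r - 1 \<and> N = r*(3*r - 1) div 2 then (-1::int)^r else 0)
          + (if k = 3*r \<and> N = r*(3*r + 1) div 2 then (-1::int)^r else 0))"
proof -
  define w where "w p = (-1::int) ^ part_n p" for p :: "nat set"
  define RM where "RM = {r \<in> {1..k+1}. k = 3*r - 1 \<and> N = r * (3*r - 1) div 2}"
  define RP where "RP = {r \<in> {1..k+1}. k = 3*r \<and> N = r * (3*r + 1) div 2}"
  have "RM = {} \<or> RP = {}"
  proof (rule ccontr)
    assume "\<not> (RM = {} \<or> RP = {})"
    then obtain r r' where "r \<in> RM" "r' \<in> RP" by blast
    then have "3 * r = 3 * r' + 1" by (auto simp: RM_def RP_def)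
    then show False by presburger
  qed
  then have disjoint: "(\<lambda>r. {r..<2*r}) ` RM \<inter> (\<lambda>r. {r<..2*r}) ` RP = {}" by auto
  have "inj_on (\<lambda>r. {r..<2*r}) RM" "inj_on (\<lambda>r. {r<..2*r}) RP"
    by (auto intro!: inj_onI dest: arg_cong[where f = card])
  then have "sum w ((\<lambda>r. {r..<2*r}) ` RM) = (\<Sum>r \<in> RM. (-1)^r)"
    "sum w ((\<lambda>r. {r<..2*r}) ` RP) = (\<Sum>r \<in> RP. (-1)^r)"
    by (simp_all add: sum.reindex w_def part_n_def)
  moreover have "{} \<notin> (\<lambda>r. {r..<2*r}) ` RM" "{} \<notin> (\<lambda>r. {r<..2*r}) ` RP"
    by (auto simp: RM_def RP_def)
  moreover have "finite RM" "finite RP" by (simp_all add: RM_def RP_def)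
  ultimately have "sum w {p \<in> partitions_of N k. franklin_exceptional p}
      = (if k = 0 \<and> N = 0 then 1 else 0) + (\<Sum>r \<in> RM. (-1)^r) + (\<Sum>r \<in> RP. (-1)^r)"
    unfolding exceptional_partitions_of RM_def[symmetric] RP_def[symmetric] using disjoint
    by (simp add: sum.union_disjoint Int_Un_distrib2 w_def part_n_def)
  moreover have "(\<Sum>r \<in> RM. (-1::int)^r)
      = (\<Sum>r \<in> {1..k+1}. if k = 3*r - 1 \<and> N = r*(3*r - 1) div 2 then (-1)^r else 0)"
    "(\<Sum>r \<in> RP. (-1::int)^r)
      = (\<Sum>r \<in> {1..k+1}. if k = 3*r \<and> N = r*(3*r + 1) div 2 then (-1)^r else 0)"
    unfolding RM_def RP_def by (simp_all only: sum.inter_filter[OF finite_atLeastAtMost])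
  ultimately show ?thesis by (simp add: w_def sum.distrib)
qed

theorem mainTheorem5:
  fixes k N :: nat
  shows "(\<Sum>p \<in> {p \<in> distinct_partitions. part_N p = N \<and> part_m p + part_n p = k}.
            (-1::int) ^ part_n p)
       = (if k = 0 \<and> N = 0 then 1 else 0)
         + (\<Sum>r \<in> {1..k+1}.
              (if k = 3*r - 1 \<and> N = r*(3*r - 1) div 2 then (-1::int)^r else 0)
            + (if k = 3*r \<and> N = r*(3*r + 1) div 2 then (-1::int)^r else 0))"
  using sum_sign_partitions_of_eq_exceptional[of N k] sum_sign_exceptional_partitions_of[of N k]
  by (simp add: partitions_of_def)

end
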